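(* Let $K$ be a field of characteristic $0$ and $a(t),b(t)\in K[t]$. Assume that $Na'(t)+b(t)$ and $a(t)$ are coprime for every positive integer $N$. Let $n$ be a positive integer and $P(t),Q(t)\in K[t]$ satisfy $Q(t)a(t)^n=L^*\cdot P(t)$. Then $P(t)$ is divisible by $a(t)^n$.
   Context: $L=-a(z)\frac{d}{dz}+b(z)$ and its adjoint $L^*$ acts on $K[t]$ by $L^*\cdot P(t)=\frac{d}{dt}(a(t)P(t))+b(t)P(t)=(a'(t)+b(t))P(t)+a(t)P'(t)$. *)

theory Defs
  imports "HOL-Computational_Algebra.Computational_Algebra"
begin

text \<open>Adjoint operator L* of L = -a(z) d/dz + b(z), acting on K[t]:
  L* P = (a' + b) P + a P'.\<close>
definition adjL :: "'a::field poly \<Rightarrow> 'a poly \<Rightarrow> 'a poly \<Rightarrow> 'a poly" where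
  "adjL a b P = (pderiv a + b) * P + a * pderiv P"

end

theory Submission
  imports Defs
begin

text \<open>Induction on \<open>k \<le> n\<close>: if \<open>P = a\<^sup>k R\<close>, then \<open>L\<^sup>* P = a\<^sup>k ((k + 1) a' R + b R + a R')\<close>.
  Since \<open>a\<^sup>k\<^sup>+\<^sup>1\<close> divides \<open>L\<^sup>* P = Q a\<^sup>n\<close>, the polynomial \<open>a\<close> divides \<open>((k + 1) a' + b) R\<close>,
  and coprimality of \<open>(k + 1) a' + b\<close> with \<open>a\<close> gives \<open>a dvd R\<close>, i.e. \<open>a\<^sup>k\<^sup>+\<^sup>1 dvd P\<close>.\<close>

text \<open>The library's Bezout lemmas need a \<open>gcd\<close> instance, which \<open>'a::field poly\<close> lacks
  for a general field \<open>'a\<close>; the Euclidean algorithm gives Bezout directly.\<close>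

lemma euclidean_coprime_imp_bezout:
  fixes c a :: "'a::euclidean_ring"
  assumes "coprime c a"
  shows "\<exists>u v. u * c + v * a = 1"
  using assms
proof (induction a arbitrary: c taking: euclidean_size rule: measure_induct_rule)
  case (less a c)
  show ?case
  proof (cases "a = 0")
    case True
    then have "c dvd 1"
      using less.prems by simp
    then obtain w where "1 = c * w"
      by (elim dvdE)
    then have "w * c + 0 * a = 1"
      by (simp add: mult.commute)
    then show ?thesis
      by blast
  next
    case False
    have "coprime a (c mod a)"
      using less.prems False by (metis coprime_commute coprime_mod_right_iff)
    moreover have "euclidean_size (c mod a) < euclidean_size a"
      using False by (rule mod_size_less)
    ultimately obtain u v where "u * a + v * (c mod a) = 1"
      using less.IH by blast
    moreover have "c mod a = c - c div a * a"
      by (rule minus_div_mult_eq_mod [symmetric])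
    ultimately have "v * c + (u - v * (c div a)) * a = 1"
      by (simp add: algebra_simps)
    then show ?thesis
      by blast
  qed
qed

lemma euclidean_coprime_dvd_mult_right:
  fixes a b c :: "'a::euclidean_ring"
  assumes "coprime c a" and "a dvd c * b"
  shows "a dvd b"
proof -
  obtain u v where "u * c + v * a = 1"
    using euclidean_coprime_imp_bezout [OF assms(1)] by blast
  then have "b = (u * c + v * a) * b"
    by simp
  also have "\<dots> = u * (c * b) + a * (v * b)"
    by (simp add: algebra_simps)
  also have "a dvd \<dots>"
    using assms(2) by simp
  finally show ?thesis .
qed

lemma adjL_mult_power:
  fixes a b R :: "'a::field poly"
  shows "adjL a b (a ^ k * R) =
    a ^ k * ((smult (of_nat (Suc k)) (pderiv a) + b) * R + a * pderiv R)"
proof -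
  have a_pderiv_power: "a * pderiv (a ^ k) = of_nat k * a ^ k * pderiv a"
    by (cases k) (simp_all only: pderiv_power_Suc, simp_all add: of_nat_poly algebra_simps)
  have "adjL a b (a ^ k * R) = (pderiv a + b) * a ^ k * R + a * pderiv (a ^ k) * R
      + a ^ k * a * pderiv R"
    by (simp add: adjL_def pderiv_mult algebra_simps)
  then show ?thesis
    by (simp add: a_pderiv_power of_nat_poly smult_add_left algebra_simps)
qed

lemma power_Suc_dvd_if_dvd_adjL:
  fixes a b P :: "'a::field poly"
  assumes cop: "coprime (smult (of_nat (Suc k)) (pderiv a) + b) a"
    and dvd_P: "a ^ k dvd P"
    and dvd_adjL: "a ^ Suc k dvd adjL a b P"
  shows "a ^ Suc k dvd P"
proof -
  obtain R where R: "P = a ^ k * R"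
    using dvd_P by (elim dvdE)
  show ?thesis
  proof (cases "a ^ k = 0")
    case True
    then show ?thesis
      using R by simp
  next
    case False
    let ?c = "smult (of_nat (Suc k)) (pderiv a) + b"
    have "a ^ k * a dvd a ^ k * (?c * R + a * pderiv R)"
      using dvd_adjL unfolding R adjL_mult_power by (simp only: power_Suc2)
    then have "a dvd ?c * R + a * pderiv R"
      by (rule dvd_times_left_cancel_iff [OF False, THEN iffD1])
    then have "a dvd ?c * R"
      by (simp only: dvd_add_left_iff dvd_triv_left)
    with cop have "a dvd R"
      by (rule euclidean_coprime_dvd_mult_right)
    then show ?thesis
      by (simp add: R mult.commute)
  qed
qed

theorem lemma3p6:
  fixes a b P Q :: "'a::field_char_0 poly" and n :: nat
  assumes cop: "\<And>N::nat. N > 0 \<Longrightarrow> coprime (smult (of_nat N) (pderiv a) + b) a"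
    and n: "n > 0"
    and eq: "Q * a ^ n = adjL a b P"
  shows "a ^ n dvd P"
proof -
  have "a ^ k dvd P" if "k \<le> n" for k
    using that
  proof (induction k)
    case 0
    then show ?case by simp
  next
    case (Suc k)
    have "a ^ k dvd P"
      using Suc by simp
    moreover have "a ^ Suc k dvd Q * a ^ n"
      using le_imp_power_dvd [OF Suc.prems] by (rule dvd_mult)
    then have "a ^ Suc k dvd adjL a b P"
      by (simp only: eq)
    ultimately show ?case
      by (rule power_Suc_dvd_if_dvd_adjL [OF cop [OF zero_less_Suc]])
  qed
  then show ?thesis
    by simp
qed

end
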